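(* Let $\mathbf{k}$ be a commutative ring, $n\ge0$, $\mathcal{A}=\mathbf{k}[S_n]$. The family $\{\mathbf{B}_{\operatorname{LRM}'(w)}\,w \mid w\in S_n\}$ is a basis of the $\mathbf{k}$-module $\mathcal{A}$.
   Context: $S_n$ is the symmetric group on $[n]=\{1,\dots,n\}$, with product $(uw)(i)=u(w(i))$. $\operatorname{Des}(u)=\{i\in[n-1]:u(i)>u(i+1)\}$; for $I\subseteq[n-1]$, $\mathbf{B}_I=\sum_{u\in S_n,\ \operatorname{Des}(u)\subseteq I}u$. $\operatorname{LRM}(w)=\{i\in[n]: w(k)>i \text{ for all } k<w^{-1}(i)\}$ (left-to-right minima), and $\operatorname{LRM}'(w)=\{\ell-1:\ell\in\operatorname{LRM}(w),\ \ell>1\}\subseteq[n-1]$. *)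

theory Defs
  imports "HOL-Combinatorics.Permutations"
begin

text \<open>Elements of the group algebra k[S_n] are functions (nat => nat) => 'k supported on S_n.
 Product in S_n: (u w)(i) = u (w i), i.e. u o w.\<close>

definition perms :: "nat \<Rightarrow> (nat \<Rightarrow> nat) set" where
  "perms n = {p. p permutes {1..n}}"

definition Des :: "nat \<Rightarrow> (nat \<Rightarrow> nat) \<Rightarrow> nat set" where
  "Des n u = {i \<in> {1..n-1}. u i > u (Suc i)}"

definition supported :: "nat \<Rightarrow> ((nat \<Rightarrow> nat) \<Rightarrow> 'k::comm_ring_1) \<Rightarrow> bool" where
  "supported n a \<longleftrightarrow> (\<forall>u. u \<notin> perms n \<longrightarrow> a u = 0)"

definition delta :: "(nat \<Rightarrow> nat) \<Rightarrow> (nat \<Rightarrow> nat) \<Rightarrow> 'k::comm_ring_1" where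
  "delta w = (\<lambda>u. if u = w then 1 else 0)"

definition conv :: "nat \<Rightarrow> ((nat \<Rightarrow> nat) \<Rightarrow> 'k::comm_ring_1) \<Rightarrow> ((nat \<Rightarrow> nat) \<Rightarrow> 'k) \<Rightarrow> (nat \<Rightarrow> nat) \<Rightarrow> 'k" where
  "conv n a b = (\<lambda>w. \<Sum>u\<in>perms n. \<Sum>v\<in>perms n. if u \<circ> v = w then a u * b v else 0)"

definition B :: "nat \<Rightarrow> nat set \<Rightarrow> (nat \<Rightarrow> nat) \<Rightarrow> 'k::comm_ring_1" where
  "B n I = (\<lambda>u. if u \<in> perms n \<and> Des n u \<subseteq> I then 1 else 0)"

definition LRM :: "nat \<Rightarrow> (nat \<Rightarrow> nat) \<Rightarrow> nat set" where
  "LRM n w = {i \<in> {1..n}. \<forall>k. 1 \<le> k \<and> k < inv w i \<longrightarrow> w k > i}"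

definition LRM' :: "nat \<Rightarrow> (nat \<Rightarrow> nat) \<Rightarrow> nat set" where
  "LRM' n w = {l - 1 | l. l \<in> LRM n w \<and> l > 1}"

definition basis_elt :: "nat \<Rightarrow> (nat \<Rightarrow> nat) \<Rightarrow> (nat \<Rightarrow> nat) \<Rightarrow> 'k::comm_ring_1" where
  "basis_elt n w = conv n (B n (LRM' n w)) (delta w)"

definition lincomb :: "nat \<Rightarrow> ((nat \<Rightarrow> nat) \<Rightarrow> 'k::comm_ring_1) \<Rightarrow> (nat \<Rightarrow> nat) \<Rightarrow> 'k" where
  "lincomb n c = (\<lambda>x. \<Sum>w\<in>perms n. c w * basis_elt n w x)"

end

theory Submission
  imports Defs "HOL-Library.List_Lexorder"
begin

(* B_{LRM'(w)} w is the sum of the permutations u w with Des(u) \<subseteq> LRM'(w). For u \<noteq> id the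
   one-line word of u w is lexicographically smaller than that of w. Indeed, let p be the first
   position with u (w p) \<noteq> w p. The left-to-right minima of w above w p occur before position p,
   so u fixes them, and u has no descent just below a value that is not a left-to-right minimum.
   Hence u never decreases a value from the least such minimum Z on, so it permutes the values
   below Z among themselves, and being increasing on [w p, Z) it cannot move w p up.
   The family is therefore unitriangular for the lexicographic order, and a unitriangular family
   is a basis over any commutative ring. *)

lemma sum_column_unit:
  fixes b :: "'a \<Rightarrow> 'a \<Rightarrow> 'k::comm_ring_1"
  assumes "finite T" and "x \<in> T \<Longrightarrow> b x x = 1" and "\<And>w. w \<in> T \<Longrightarrow> w \<noteq> x \<Longrightarrow> b w x = 0"
  shows "(\<Sum>w\<in>T. c w * b w x) = (if x \<in> T then c x else 0)"
proof -
  have "(\<Sum>w\<in>T. c w * b w x) = (\<Sum>w\<in>T. if w = x then c x else 0)"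
    using assms(2,3) by (intro sum.cong) auto
  then show ?thesis
    using assms(1) by simp
qed

lemma unitriangular_lincomb_eq_0:
  fixes b :: "'a \<Rightarrow> 'a \<Rightarrow> 'k::comm_ring_1" and r :: "'a \<Rightarrow> nat"
  assumes "finite P"
    and diag: "\<And>w. w \<in> P \<Longrightarrow> b w w = 1"
    and triang: "\<And>w x. w \<in> P \<Longrightarrow> b w x \<noteq> 0 \<Longrightarrow> x = w \<or> r x < r w"
    and zero: "(\<lambda>x. \<Sum>w\<in>P. c w * b w x) = (\<lambda>_. 0)"
    and "w \<in> P"
  shows "c w = 0"
proof (rule ccontr)
  define S where "S = {w \<in> P. c w \<noteq> 0}"
  assume "c w \<noteq> 0"
  then have "r ` S \<noteq> {}" and "finite (r ` S)"
    using \<open>w \<in> P\<close> \<open>finite P\<close> by (auto simp: S_def)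
  then obtain t where t: "t \<in> S" "r t = Max (r ` S)"
    using Max_in by (metis imageE)
  have "0 = (\<Sum>w\<in>P. c w * b w t)"
    using fun_cong[OF zero] by simp
  also have "\<dots> = (\<Sum>w\<in>P. if c w \<noteq> 0 then c w * b w t else 0)"
    by (intro sum.cong) auto
  also have "\<dots> = (\<Sum>w\<in>S. c w * b w t)"
    unfolding S_def using \<open>finite P\<close> by (simp add: sum.inter_filter)
  also have "\<dots> = c t"
  proof -
    have "b w t = 0" if "w \<in> S" "w \<noteq> t" for w
    proof -
      have "r w \<le> r t"
        using Max_ge[OF \<open>finite (r ` S)\<close>] that(1) t(2) by simp
      then show ?thesis
        using triang[of w t] that by (auto simp: S_def)
    qed
    moreover have "finite S" "b t t = 1"
      using \<open>finite P\<close> diag t(1) by (auto simp: S_def)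
    ultimately show ?thesis
      using sum_column_unit[of S t b c] t(1) by simp
  qed
  finally show False
    using t(1) by (simp add: S_def)
qed

lemma unitriangular_spans:
  fixes b :: "'a \<Rightarrow> 'a \<Rightarrow> 'k::comm_ring_1" and r :: "'a \<Rightarrow> nat"
  assumes "finite P"
    and diag: "\<And>w. w \<in> P \<Longrightarrow> b w w = 1"
    and triang: "\<And>w x. w \<in> P \<Longrightarrow> b w x \<noteq> 0 \<Longrightarrow> x \<in> P \<and> (x = w \<or> r x < r w)"
    and supp: "\<And>x. x \<notin> P \<Longrightarrow> f x = 0"
  shows "\<exists>c. f = (\<lambda>x. \<Sum>w\<in>P. c w * b w x)"
proof -
  have "\<exists>c. f = (\<lambda>x. \<Sum>w\<in>P. c w * b w x)" if "\<And>x. f x \<noteq> 0 \<Longrightarrow> x \<in> P \<and> r x < m" for m f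
    using that
  proof (induction m arbitrary: f)
    case 0
    then have "f = (\<lambda>x. \<Sum>w\<in>P. 0 * b w x)"
      by auto
    then show ?case
      by (rule exI[where x = "\<lambda>_. 0"])
  next
    case (Suc m)
    define T where "T = {w \<in> P. r w = m}"
    define g where "g x = f x - (\<Sum>w\<in>T. f w * b w x)" for x
    have "g x = 0" if "\<not> (x \<in> P \<and> r x < m)" for x
    proof -
      have "b w x = 0" if "w \<in> T" "w \<noteq> x" for w
        using triang[of w x] that \<open>\<not> (x \<in> P \<and> r x < m)\<close> by (auto simp: T_def)
      then have "(\<Sum>w\<in>T. f w * b w x) = (if x \<in> T then f x else 0)"
        using \<open>finite P\<close> diag by (intro sum_column_unit) (auto simp: T_def)
      moreover have "x \<notin> T \<Longrightarrow> f x = 0"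
        using Suc.prems[of x] that by (fastforce simp: T_def)
      ultimately show ?thesis
        by (simp add: g_def)
    qed
    then obtain c where c: "g = (\<lambda>x. \<Sum>w\<in>P. c w * b w x)"
      using Suc.IH by blast
    have "f x = (\<Sum>w\<in>P. (c w + (if r w = m then f w else 0)) * b w x)" for x
    proof -
      have "(\<Sum>w\<in>T. f w * b w x) = (\<Sum>w\<in>P. (if r w = m then f w else 0) * b w x)"
        unfolding T_def using \<open>finite P\<close> by (simp add: sum.inter_filter) (rule sum.cong; simp)
      then show ?thesis
        using fun_cong[OF c, of x] by (simp add: g_def distrib_right sum.distrib diff_eq_eq)
    qed
    then show ?case
      by (intro exI[where x = "\<lambda>w. c w + (if r w = m then f w else 0)"] ext)
  qed
  moreover have "f x \<noteq> 0 \<Longrightarrow> x \<in> P \<and> r x < Suc (Max (r ` P))" for x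
    using supp \<open>finite P\<close> by (meson Max_ge finite_imageI image_eqI le_imp_less_Suc)
  ultimately show ?thesis
    by blast
qed

lemma card_less_key_strict_mono:
  fixes key :: "'a \<Rightarrow> 'b::order"
  assumes "finite P" and "x \<in> P" and "key x < key w"
  shows "card {y \<in> P. key y < key x} < card {y \<in> P. key y < key w}"
  using assms by (intro psubset_card_mono) (auto dest: less_trans)

lemma le_apply_if_ascending_from_fixed_point:
  fixes u :: "nat \<Rightarrow> nat"
  assumes "Z \<le> y" and "u Z = Z"
    and ascent: "\<And>t. Z \<le> t \<Longrightarrow> t < y \<Longrightarrow> u (Suc t) \<noteq> Suc t \<Longrightarrow> u t < u (Suc t)"
  shows "y \<le> u y"
  using assms(1)
proof (induction rule: dec_induct)
  case base
  then show ?case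
    using assms(2) by simp
next
  case (step t)
  then show ?case
    using ascent[of t] by fastforce
qed

lemma apply_less_if_le_apply_above:
  fixes u :: "nat \<Rightarrow> nat"
  assumes u: "u permutes {1..n}" and above: "\<And>t. Z \<le> t \<Longrightarrow> t \<le> n \<Longrightarrow> t \<le> u t" and "y < Z"
  shows "u y < Z"
proof (rule ccontr)
  assume "\<not> u y < Z"
  have "u ` {Z..n} \<subseteq> {Z..n}"
  proof (intro image_subsetI)
    fix t assume t: "t \<in> {Z..n}"
    have "u t \<le> n"
      using permutes_in_image[OF u, of t] permutes_not_in[OF u, of t] t by (cases "t \<in> {1..n}") auto
    then show "u t \<in> {Z..n}"
      using above[of t] t by simp
  qed
  then have "u ` {Z..n} = {Z..n}"
    by (rule endo_inj_surj[OF finite_atLeastAtMost _ inj_on_subset[OF permutes_inj[OF u] subset_UNIV]])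
  moreover have "y \<in> {1..n}"
    using permutes_not_in[OF u, of y] \<open>\<not> u y < Z\<close> \<open>y < Z\<close> by fastforce
  then have "u y \<in> {Z..n}"
    using permutes_in_image[OF u, of y] \<open>\<not> u y < Z\<close> by simp
  ultimately have "y \<in> {Z..n}"
    using inj_image_mem_iff[OF permutes_inj[OF u]] by metis
  then show False
    using \<open>y < Z\<close> by simp
qed

lemma apply_le_if_ascending_below:
  fixes u :: "nat \<Rightarrow> nat"
  assumes "v \<le> m" and "u m \<le> m" and ascent: "\<And>t. v \<le> t \<Longrightarrow> t < m \<Longrightarrow> u t < u (Suc t)"
  shows "u v \<le> v"
  using assms(1)
proof (induction rule: inc_induct)
  case base
  then show ?case
    using assms(2) .
next
  case (step t)
  then show ?case
    using ascent[of t] by simp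
qed

lemma finite_perms: "finite (perms n)"
  unfolding perms_def by (simp add: finite_permutations)

lemma in_LRM'_iff: "1 \<le> y \<Longrightarrow> y \<in> LRM' n w \<longleftrightarrow> Suc y \<in> LRM n w"
  unfolding LRM'_def by force

lemma ascent_if_not_in_Des_superset:
  assumes "u permutes {1..n}" and "Des n u \<subseteq> I" and "y \<in> {1..n-1}" and "y \<notin> I"
  shows "u y < u (Suc y)"
proof -
  have "\<not> u (Suc y) < u y"
    using assms(2-4) by (auto simp: Des_def)
  moreover have "u y \<noteq> u (Suc y)"
    using permutes_inj[OF assms(1)] by (metis injD n_not_Suc_n)
  ultimately show ?thesis
    by simp
qed

lemma fixed_LRM_above:
  assumes w: "w permutes {1..n}" and l: "l \<in> LRM n w" and "w p < l" and "1 \<le> p"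
    and fixed: "\<And>q. q \<in> {1..<p} \<Longrightarrow> u (w q) = w q"
  shows "u l = l"
proof -
  define q where "q = inv w l"
  have "l \<in> {1..n}" and before_l: "\<And>k. 1 \<le> k \<Longrightarrow> k < q \<Longrightarrow> l < w k"
    using l by (auto simp: LRM_def q_def)
  then have "q \<in> {1..n}" and "w q = l"
    using permutes_in_image[OF permutes_inv[OF w]] permutes_inverses(1)[OF w] by (auto simp: q_def)
  moreover have "\<not> p < q"
    using before_l[of p] \<open>w p < l\<close> \<open>1 \<le> p\<close> less_asym by blast
  ultimately have "q \<in> {1..<p}"
    using \<open>w p < l\<close> by (cases "p = q") auto
  then show ?thesis
    using fixed \<open>w q = l\<close> by force
qed

lemma apply_le_at_first_moved_position:
  assumes w: "w permutes {1..n}" and u: "u permutes {1..n}" and D: "Des n u \<subseteq> LRM' n w"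
    and p: "p \<in> {1..n}" and fixed: "\<And>q. q \<in> {1..<p} \<Longrightarrow> u (w q) = w q"
  shows "u (w p) \<le> w p"
proof -
  define v where "v = w p"
  have v: "v \<in> {1..n}"
    using permutes_in_image[OF w] p by (simp add: v_def)
  have "finite (LRM n w)"
    by (rule finite_subset[of _ "{1..n}"]) (auto simp: LRM_def)
  define Z where "Z = Min (insert (Suc n) {l \<in> LRM n w. v < l})"
  have Z_le: "Z \<le> l" if "l \<in> LRM n w" "v < l" for l
    using \<open>finite (LRM n w)\<close> that by (simp add: Z_def)
  have Z_cases: "Z = Suc n \<or> Z \<in> LRM n w \<and> v < Z"
    using Min_in[of "insert (Suc n) {l \<in> LRM n w. v < l}"] \<open>finite (LRM n w)\<close> by (auto simp: Z_def)
  then have "v < Z" "Z \<le> Suc n"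
    using v Z_le[of Z] by (auto simp: Z_def \<open>finite (LRM n w)\<close>)
  have LRM_fixed: "u l = l" if "l \<in> LRM n w" "v < l" for l
    using fixed_LRM_above[OF w that(1) _ _ fixed] that(2) p by (simp add: v_def)
  have ascent: "u t < u (Suc t)" if "t \<in> {1..n-1}" "Suc t \<notin> LRM n w" for t
    using ascent_if_not_in_Des_superset[OF u D that(1)] in_LRM'_iff[of t n w] that by simp
  have above: "t \<le> u t" if "Z \<le> t" "t \<le> n" for t
  proof (rule le_apply_if_ascending_from_fixed_point[OF that(1)])
    show "u Z = Z"
      using Z_cases that LRM_fixed by auto
    show "u s < u (Suc s)" if "Z \<le> s" "s < t" "u (Suc s) \<noteq> Suc s" for s
    proof (rule ascent)
      show "s \<in> {1..n-1}"
        using that \<open>v < Z\<close> \<open>t \<le> n\<close> v by auto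
      show "Suc s \<notin> LRM n w"
        using LRM_fixed[of "Suc s"] that \<open>v < Z\<close> by auto
    qed
  qed
  have "u (Z - 1) < Z"
    using apply_less_if_le_apply_above[OF u above] \<open>v < Z\<close> by simp
  moreover have "u t < u (Suc t)" if "v \<le> t" "t < Z - 1" for t
    using ascent[of t] Z_le[of "Suc t"] that v \<open>Z \<le> Suc n\<close> by fastforce
  ultimately show ?thesis
    unfolding v_def[symmetric] using \<open>v < Z\<close>
    by (intro apply_le_if_ascending_below[of v "Z - 1"]) auto
qed

definition perm_word :: "nat \<Rightarrow> (nat \<Rightarrow> nat) \<Rightarrow> nat list" where
  "perm_word n w = map w [1..<Suc n]"

lemma perm_word_less_if_first_difference:
  assumes "p \<in> {1..n}" and "\<And>q. q \<in> {1..<p} \<Longrightarrow> x q = w q" and "x p < w p"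
  shows "perm_word n x < perm_word n w"
proof -
  have split: "[1..<Suc n] = [1..<p] @ p # [Suc p..<Suc n]"
    using assms(1) upt_add_eq_append[of 1 p "Suc n - p"] by (simp add: upt_conv_Cons)
  have prefix: "map x [1..<p] = map w [1..<p]"
    using assms(2) by simp
  show ?thesis
    unfolding perm_word_def list_less_def split map_append list.map prefix
    by (rule lexord_append_left_rightI) (simp add: assms(3))
qed

lemma perm_word_less_if_Des_subset_LRM':
  assumes w: "w permutes {1..n}" and u: "u permutes {1..n}" and D: "Des n u \<subseteq> LRM' n w"
    and "u \<noteq> id"
  shows "perm_word n (u \<circ> w) < perm_word n w"
proof -
  let ?moved = "\<lambda>p. p \<in> {1..n} \<and> u (w p) \<noteq> w p"
  obtain y where "u y \<noteq> y"
    using \<open>u \<noteq> id\<close> by (metis eq_id_iff)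
  then have "?moved (inv w y)"
    using permutes_not_in[OF u] permutes_in_image[OF permutes_inv[OF w]]
      permutes_inverses(1)[OF w] by fastforce
  define p where "p = (LEAST p. ?moved p)"
  have p: "?moved p"
    unfolding p_def by (rule LeastI) fact
  have before: "u (w q) = w q" if "q \<in> {1..<p}" for q
    using not_less_Least[of q ?moved] p that by (auto simp: p_def)
  have "u (w p) < w p"
    using apply_le_at_first_moved_position[OF w u D _ before] p by fastforce
  then show ?thesis
    using perm_word_less_if_first_difference[of p n "u \<circ> w" w] p before by simp
qed

lemma conv_delta_right:
  assumes "w \<in> perms n" and "supported n a"
  shows "conv n a (delta w) x = a (x \<circ> inv w)"
proof -
  have w: "w permutes {1..n}"
    using assms(1) by (simp add: perms_def)
  have comp_w_iff: "u \<circ> w = x \<longleftrightarrow> u = x \<circ> inv w" for u :: "nat \<Rightarrow> nat"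
    using permutes_inv_o[OF w] by (auto simp: o_assoc[symmetric])
  have "(\<Sum>v\<in>perms n. if u \<circ> v = x then a u * delta w v else 0)
      = (\<Sum>v\<in>perms n. if v = w then (if u \<circ> w = x then a u else 0) else 0)" for u
    by (intro sum.cong) (auto simp: delta_def)
  then have "conv n a (delta w) x = (\<Sum>u\<in>perms n. if u = x \<circ> inv w then a u else 0)"
    unfolding conv_def comp_w_iff using assms(1) finite_perms by simp
  also have "\<dots> = a (x \<circ> inv w)"
    using assms(2) finite_perms by (simp add: supported_def)
  finally show ?thesis .
qed

lemma basis_elt_eq:
  assumes "w \<in> perms n"
  shows "basis_elt n w x = B n (LRM' n w) (x \<circ> inv w)"
  unfolding basis_elt_def using assms by (rule conv_delta_right) (simp add: supported_def B_def)

lemma basis_elt_self: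
  assumes "w \<in> perms n"
  shows "basis_elt n w w = 1"
proof -
  have "w \<circ> inv w = id"
    using assms by (simp add: perms_def permutes_inv_o)
  moreover have "Des n id = {}"
    by (simp add: Des_def)
  ultimately show ?thesis
    using assms by (simp add: basis_elt_eq B_def perms_def permutes_id)
qed

lemma basis_elt_nonzero:
  assumes "w \<in> perms n" and "basis_elt n w x \<noteq> 0"
  shows "x \<in> perms n \<and> (x = w \<or> perm_word n x < perm_word n w)"
proof -
  define u where "u = x \<circ> inv w"
  have w: "w permutes {1..n}"
    using assms(1) by (simp add: perms_def)
  have u: "u permutes {1..n}" and D: "Des n u \<subseteq> LRM' n w"
    using assms by (auto simp: basis_elt_eq u_def B_def perms_def split: if_splits)
  have x: "x = u \<circ> w"
    using permutes_inv_o(2)[OF w] by (simp add: u_def comp_assoc)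
  have "x \<in> perms n"
    using permutes_compose[OF w u] by (simp add: x perms_def)
  moreover have "x = w \<or> perm_word n x < perm_word n w"
    using perm_word_less_if_Des_subset_LRM'[OF w u D] by (cases "u = id") (auto simp: x)
  ultimately show ?thesis ..
qed

theorem corollary3p6:
  fixes n :: nat
  shows "(\<forall>c :: (nat \<Rightarrow> nat) \<Rightarrow> 'k::comm_ring_1.
            lincomb n c = (\<lambda>_. 0) \<longrightarrow> (\<forall>w\<in>perms n. c w = 0))
       \<and> (\<forall>f :: (nat \<Rightarrow> nat) \<Rightarrow> 'k. supported n f \<longrightarrow> (\<exists>c. f = lincomb n c))"
proof -
  define rank where "rank w = card {x \<in> perms n. perm_word n x < perm_word n w}" for w
  have diag: "(basis_elt n w w :: 'k) = 1" if "w \<in> perms n" for w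
    using that by (rule basis_elt_self)
  have triang: "x \<in> perms n \<and> (x = w \<or> rank x < rank w)"
    if "w \<in> perms n" "(basis_elt n w x :: 'k) \<noteq> 0" for w x
    using basis_elt_nonzero[OF that] card_less_key_strict_mono[OF finite_perms]
    by (auto simp: rank_def)
  show ?thesis
  proof (intro conjI allI impI)
    fix c :: "(nat \<Rightarrow> nat) \<Rightarrow> 'k"
    assume "lincomb n c = (\<lambda>_. 0)"
    then show "\<forall>w\<in>perms n. c w = 0"
      unfolding lincomb_def
      using unitriangular_lincomb_eq_0[where b = "basis_elt n" and r = rank, OF finite_perms diag] triang
      by blast
  next
    fix f :: "(nat \<Rightarrow> nat) \<Rightarrow> 'k"
    assume "supported n f"
    then show "\<exists>c. f = lincomb n c"
      unfolding lincomb_def supported_def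
      by (intro unitriangular_spans[where b = "basis_elt n" and r = rank, OF finite_perms diag triang])
        auto
  qed
qed

end
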